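(* Let $T=(V,E)$ be a temporal bipartite graph with $m=|E|$ edges, let $\tau>0$, $c>0$, let $s$ be a positive integer and let $i\in\{1,\dots,6\}$. Let $\widehat{C}_i$ be the estimator produced by \texttt{TBC-I} with parameters $s$ and $c$, as described in the context. Then $\mathbb{E}[\widehat{C}_i]=C_i$ and $\operatorname{Var}[\widehat{C}_i]\le\frac{m-1}{s}\,C_i^2$.
   Context: A temporal bipartite graph $T=(V,E)$ has node set $V=U\cup L$ with $U\cap L=\emptyset$ and a finite (multi)set $E\subseteq U\times L\times\mathbb{R}^+$ of temporal edges $(u,l,t)$ (several edges may join the same pair $u,l$ at different times); $m=|E|$. A temporal butterfly $B_i$ ($i=1,\dots,6$) is the butterfly on nodes $u'_1,u'_2$ (upper side) and $l'_1,l'_2$ (lower side) with edges $(u'_1,l'_1),(u'_2,l'_1),(u'_1,l'_2),(u'_2,l'_2)$ together with an ordering $\sigma_i$ of these four edges; $\sigma_1,\dots,\sigma_6$ are the six orderings in which $(u'_1,l'_1)$ comes first. Given $\tau>0$, a set $S$ of four temporal edges $\{(u_x,l_x,t_1),(u_y,l_x,t_2),(u_x,l_y,t_3),(u_y,l_y,t_4)\}$ of $T$ with $u_x\ne u_y\in U$, $l_x\ne l_y\in L$ is a $\tau$-instance of $B_i$ if, under the map $u_x\mapsto u'_1,u_y\mapsto u'_2,l_x\mapsto l'_1,l_y\mapsto l'_2$, the order of the four edges by timestamp matches $\sigma_i$ (so $(u_x,l_x,t_1)$ has the smallest timestamp), and $\max_{j\in\{2,3,4\}}t_j-t_1\le\tau$.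 $C_i$ denotes the number of $\tau$-instances of $B_i$ in $T$, and for $e\in E$, $C_i(e)$ denotes the number of $\tau$-instances of $B_i$ whose first (smallest-timestamp) edge is $e$. Algorithm \texttt{TBC-I}: draw $s$ edges $e'_1,\dots,e'_s$ from $E$, each uniformly at random and independently. For each drawn edge $e'=(u,l,t')$, add to the multiset $\widehat{E}$ every edge of $E$ whose timestamp lies in $[t',t'+c\tau]$ (an edge may be added several times). For $e=(u,l,t)\in E$ let $m'_e$ be the number of edges of $E$ with timestamp in $[t-c\tau,t]$. The output is $\widehat{C}_i=\sum_{e\in\widehat{E}}\frac{m}{s\,m'_e}C_i(e)$, the sum counting multiplicities in $\widehat{E}$. *)

theory Defs
  imports "HOL-Probability.Probability"
begin

text \<open>A temporal bipartite graph is given by a finite set E of edge identifiers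
 (so that parallel / repeated edges of the multiset are allowed), together with
 maps eu (upper endpoint, in type 'u), el (lower endpoint, in type 'l, disjoint
 from 'u) and et (timestamp).\<close>

text \<open>The six orderings sigma_1..sigma_6 of the butterfly edges in which edge 0
 = (u1',l1') comes first. Edge labels: 0 = (u1',l1'), 1 = (u2',l1'),
 2 = (u1',l2'), 3 = (u2',l2').\<close>
definition sigma_ord :: "nat \<Rightarrow> nat list" where
  "sigma_ord i = [[0,1,2,3],[0,1,3,2],[0,2,1,3],[0,2,3,1],[0,3,1,2],[0,3,2,1]] ! (i - 1)"

definition matches_order :: "nat \<Rightarrow> (nat \<Rightarrow> real) \<Rightarrow> bool" where
  "matches_order i t \<longleftrightarrow> sorted_wrt (<) (map t (sigma_ord i))"

definition tau_instances ::
  "'e set \<Rightarrow> ('e \<Rightarrow> 'u) \<Rightarrow> ('e \<Rightarrow> 'l) \<Rightarrow> ('e \<Rightarrow> real) \<Rightarrow> real \<Rightarrow> nat \<Rightarrow> 'e set set" where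
  "tau_instances E eu el et tau i =
    {S. \<exists>a b c d. S = {a, b, c, d} \<and> a \<in> E \<and> b \<in> E \<and> c \<in> E \<and> d \<in> E \<and>
        eu a = eu c \<and> eu b = eu d \<and> el a = el b \<and> el c = el d \<and>
        eu a \<noteq> eu b \<and> el a \<noteq> el c \<and>
        matches_order i ((\<lambda>_. 0)(0 := et a, 1 := et b, 2 := et c, 3 := et d)) \<and>
        Max {et b, et c, et d} - et a \<le> tau}"

definition count_C :: "'e set \<Rightarrow> ('e \<Rightarrow> 'u) \<Rightarrow> ('e \<Rightarrow> 'l) \<Rightarrow> ('e \<Rightarrow> real) \<Rightarrow> real \<Rightarrow> nat \<Rightarrow> nat" where
  "count_C E eu el et tau i = card (tau_instances E eu el et tau i)"

definition count_C_edge ::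
  "'e set \<Rightarrow> ('e \<Rightarrow> 'u) \<Rightarrow> ('e \<Rightarrow> 'l) \<Rightarrow> ('e \<Rightarrow> real) \<Rightarrow> real \<Rightarrow> nat \<Rightarrow> 'e \<Rightarrow> nat" where
  "count_C_edge E eu el et tau i e =
     card {S \<in> tau_instances E eu el et tau i. e \<in> S \<and> (\<forall>f\<in>S. f \<noteq> e \<longrightarrow> et e < et f)}"

definition m_prime :: "'e set \<Rightarrow> ('e \<Rightarrow> real) \<Rightarrow> real \<Rightarrow> real \<Rightarrow> 'e \<Rightarrow> nat" where
  "m_prime E et c tau e = card {f \<in> E. et e - c * tau \<le> et f \<and> et f \<le> et e}"

text \<open>The multiset
 hat-E consists, for each draw j, of all edges with timestamp in
 [t(d j), t(d j) + c tau]; multiplicities are handled by summing over draws.\<close>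
definition TBC_I_estimate ::
  "'e set \<Rightarrow> ('e \<Rightarrow> 'u) \<Rightarrow> ('e \<Rightarrow> 'l) \<Rightarrow> ('e \<Rightarrow> real) \<Rightarrow> real \<Rightarrow> real \<Rightarrow> nat \<Rightarrow> nat
     \<Rightarrow> (nat \<Rightarrow> 'e) \<Rightarrow> real" where
  "TBC_I_estimate E eu el et tau c s i d =
     (\<Sum>j<s. \<Sum>e\<in>{e \<in> E. et (d j) \<le> et e \<and> et e \<le> et (d j) + c * tau}.
        real (card E) / (real s * real (m_prime E et c tau e)) * real (count_C_edge E eu el et tau i e))"

definition draws_pmf :: "'e set \<Rightarrow> nat \<Rightarrow> (nat \<Rightarrow> 'e) pmf" where
  "draws_pmf E s = Pi_pmf {..<s} undefined (\<lambda>_. pmf_of_set E)"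

end

theory Submission
  imports Defs
begin

text \<open>The estimate is a sum of s independent copies of Y(d), the (scaled) window weight of a
  uniformly drawn edge d: the sum of m C_i(e) / (s m'_e) over the edges e in the forward window
  [t_d, t_d + c tau]. Summed over all d, an edge e is reached from exactly the m'_e edges of its
  backward window, which cancels the factor 1/m'_e, and summing C_i(e) over all e counts every
  instance once, by its unique first edge. Hence E[Y] = C_i / s and the estimator is unbiased.
  Its variance is s Var[Y] = s (E[Y^2] - E[Y]^2), and E[Y^2] = (\<Sum> Y^2) / m \<le> (\<Sum> Y)^2 / m
  since Y \<ge> 0, which gives the bound (m - 1) / s C_i^2.\<close>

lemma sum_squares_le_square_sum:
  fixes g :: "'a \<Rightarrow> real"
  assumes "finite A" "\<And>x. x \<in> A \<Longrightarrow> 0 \<le> g x"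
  shows "(\<Sum>x\<in>A. (g x)\<^sup>2) \<le> (sum g A)\<^sup>2"
proof -
  have "(\<Sum>x\<in>A. (g x)\<^sup>2) \<le> (\<Sum>x\<in>A. g x * sum g A)"
    using assms by (intro sum_mono) (auto simp: power2_eq_square intro!: mult_left_mono member_le_sum)
  also have "\<dots> = (sum g A)\<^sup>2"
    by (simp add: sum_distrib_right power2_eq_square)
  finally show ?thesis .
qed

lemma variance_pmf_of_set_le:
  fixes g :: "'a \<Rightarrow> real"
  assumes "finite A" "A \<noteq> {}" "\<And>x. x \<in> A \<Longrightarrow> 0 \<le> g x"
  shows "measure_pmf.variance (pmf_of_set A) g \<le> (real (card A) - 1) / (real (card A))\<^sup>2 * (sum g A)\<^sup>2"
proof -
  define n where "n = real (card A)"
  have n_pos: "n > 0"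
    using assms(1,2) by (simp add: n_def card_gt_0_iff)
  have "measure_pmf.variance (pmf_of_set A) g = (\<Sum>x\<in>A. (g x)\<^sup>2) / n - (sum g A / n)\<^sup>2"
    using assms(1,2)
    by (subst measure_pmf.variance_eq) (auto simp: integrable_measure_pmf_finite integral_pmf_of_set n_def)
  also have "\<dots> \<le> (sum g A)\<^sup>2 / n - (sum g A / n)\<^sup>2"
    using sum_squares_le_square_sum [OF assms(1,3)] n_pos by (simp add: divide_right_mono)
  also have "\<dots> = (n - 1) / n\<^sup>2 * (sum g A)\<^sup>2"
    using n_pos by (simp add: field_simps power2_eq_square)
  finally show ?thesis
    by (simp add: n_def)
qed

lemma finite_set_Pi_pmf_const:
  assumes "finite I" "finite (set_pmf p)"
  shows "finite (set_pmf (Pi_pmf I dflt (\<lambda>_. p)))"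
  using assms by (simp add: set_Pi_pmf finite_PiE_dflt)

lemma expectation_component_Pi_pmf:
  assumes "finite I" "j \<in> I"
  shows "measure_pmf.expectation (Pi_pmf I dflt (\<lambda>_. p)) (\<lambda>h. g (h j))
           = measure_pmf.expectation p (g :: _ \<Rightarrow> real)"
proof -
  have "map_pmf (\<lambda>h. h j) (Pi_pmf I dflt (\<lambda>_. p)) = p"
    using assms by (simp add: Pi_pmf_component)
  then show ?thesis by (metis integral_map_pmf)
qed

text \<open>Nonnegativity is only needed by the library's product rule expectation_prod_Pi_pmf.\<close>
lemma expectation_mult_components_Pi_pmf:
  fixes g g' :: "'a \<Rightarrow> real"
  assumes "finite I" "finite (set_pmf p)" "j \<in> I" "k \<in> I" "j \<noteq> k"
    and "\<And>y. y \<in> set_pmf p \<Longrightarrow> 0 \<le> g y" "\<And>y. y \<in> set_pmf p \<Longrightarrow> 0 \<le> g' y"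
  shows "measure_pmf.expectation (Pi_pmf I dflt (\<lambda>_. p)) (\<lambda>h. g (h j) * g' (h k))
           = measure_pmf.expectation p g * measure_pmf.expectation p g'"
proof -
  define f where "f x v = (if x = j then g v else 1) * (if x = k then g' v else 1)" for x v
  have "(\<lambda>h. g (h j) * g' (h k)) = (\<lambda>h. \<Prod>x\<in>I. f x (h x))"
    using assms(1,3,4) by (simp add: f_def prod.distrib)
  moreover have "measure_pmf.expectation (Pi_pmf I dflt (\<lambda>_. p)) (\<lambda>h. \<Prod>x\<in>I. f x (h x))
      = (\<Prod>x\<in>I. measure_pmf.expectation p (f x))"
    using assms by (intro expectation_prod_Pi_pmf) (auto simp: f_def integrable_measure_pmf_finite)
  moreover have "measure_pmf.expectation p (f x)
      = (if x = j then measure_pmf.expectation p g else 1) * (if x = k then measure_pmf.expectation p g' else 1)" for x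
    using assms(5) by (simp add: f_def [abs_def])
  ultimately show ?thesis
    using assms(1,3,4) by (simp add: prod.distrib)
qed

lemma expectation_sum_components_Pi_pmf:
  assumes "finite I" "finite (set_pmf p)"
  shows "measure_pmf.expectation (Pi_pmf I dflt (\<lambda>_. p)) (\<lambda>h. \<Sum>j\<in>I. g (h j))
           = real (card I) * measure_pmf.expectation p (g :: _ \<Rightarrow> real)"
  using assms
  by (simp add: Bochner_Integration.integral_sum integrable_measure_pmf_finite
      finite_set_Pi_pmf_const expectation_component_Pi_pmf)

lemma variance_sum_components_Pi_pmf:
  fixes g :: "'a \<Rightarrow> real"
  assumes "finite I" "finite (set_pmf p)" "\<And>y. y \<in> set_pmf p \<Longrightarrow> 0 \<le> g y"
  shows "measure_pmf.variance (Pi_pmf I dflt (\<lambda>_. p)) (\<lambda>h. \<Sum>j\<in>I. g (h j))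
           = real (card I) * measure_pmf.variance p g"
proof -
  let ?P = "Pi_pmf I dflt (\<lambda>_. p)"
  let ?\<mu> = "measure_pmf.expectation p g"
  let ?\<mu>2 = "measure_pmf.expectation p (\<lambda>y. (g y)\<^sup>2)"
  have int_P: "integrable (measure_pmf ?P) f" for f :: "_ \<Rightarrow> real"
    using assms(1,2) by (simp add: integrable_measure_pmf_finite finite_set_Pi_pmf_const)
  have int_p: "integrable (measure_pmf p) f" for f :: "_ \<Rightarrow> real"
    using assms(2) by (rule integrable_measure_pmf_finite)
  have pair: "measure_pmf.expectation ?P (\<lambda>h. g (h j) * g (h k))
      = (if k = j then ?\<mu>2 else ?\<mu>\<^sup>2)" if "j \<in> I" "k \<in> I" for j k
    using that assms expectation_component_Pi_pmf [where g = "\<lambda>y. (g y)\<^sup>2"]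
    by (auto simp: power2_eq_square expectation_mult_components_Pi_pmf)
  have row: "(\<Sum>k\<in>I. if k = j then ?\<mu>2 else ?\<mu>\<^sup>2) = ?\<mu>2 + (real (card I) - 1) * ?\<mu>\<^sup>2"
    if "j \<in> I" for j
  proof -
    have "1 \<le> card I"
      using that assms(1) by (metis One_nat_def Suc_leI card_gt_0_iff empty_iff)
    then show ?thesis
      using that assms(1) by (simp add: sum.delta_remove)
  qed
  have "measure_pmf.expectation ?P (\<lambda>h. (\<Sum>j\<in>I. g (h j))\<^sup>2)
      = (\<Sum>j\<in>I. \<Sum>k\<in>I. measure_pmf.expectation ?P (\<lambda>h. g (h j) * g (h k)))"
    by (simp add: power2_eq_square sum_product Bochner_Integration.integral_sum int_P)
  also have "\<dots> = real (card I) * (?\<mu>2 + (real (card I) - 1) * ?\<mu>\<^sup>2)"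
    by (simp add: pair row)
  finally have second_moment: "measure_pmf.expectation ?P (\<lambda>h. (\<Sum>j\<in>I. g (h j))\<^sup>2)
      = real (card I) * (?\<mu>2 + (real (card I) - 1) * ?\<mu>\<^sup>2)" .
  have "measure_pmf.variance ?P (\<lambda>h. \<Sum>j\<in>I. g (h j))
      = measure_pmf.expectation ?P (\<lambda>h. (\<Sum>j\<in>I. g (h j))\<^sup>2)
        - (measure_pmf.expectation ?P (\<lambda>h. \<Sum>j\<in>I. g (h j)))\<^sup>2"
    by (intro measure_pmf.variance_eq int_P)
  also have "\<dots> = real (card I) * (?\<mu>2 - ?\<mu>\<^sup>2)"
    using assms(1,2) unfolding second_moment
    by (simp add: expectation_sum_components_Pi_pmf algebra_simps power2_eq_square)
  also have "?\<mu>2 - ?\<mu>\<^sup>2 = measure_pmf.variance p g"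
    by (intro measure_pmf.variance_eq [symmetric] int_p)
  finally show ?thesis .
qed

lemma card_first_edges_tau_instance:
  assumes "i \<in> {1..6}" "S \<in> tau_instances E eu el et tau i"
  shows "card {e \<in> E. e \<in> S \<and> (\<forall>f\<in>S. f \<noteq> e \<longrightarrow> et e < et f)} = 1"
proof -
  obtain a b c d where S: "S = {a, b, c, d}" "a \<in> E"
    and order: "matches_order i ((\<lambda>_. 0)(0 := et a, 1 := et b, 2 := et c, 3 := et d))"
    using assms(2) unfolding tau_instances_def by blast
  have "i = 1 \<or> i = 2 \<or> i = 3 \<or> i = 4 \<or> i = 5 \<or> i = 6"
    using assms(1) by auto
  then have "et a < et b \<and> et a < et c \<and> et a < et d"
    using order by (elim disjE) (auto simp: matches_order_def sigma_ord_def)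
  then have "{e \<in> E. e \<in> S \<and> (\<forall>f\<in>S. f \<noteq> e \<longrightarrow> et e < et f)} = {a}"
    using S by auto
  then show ?thesis
    by simp
qed

lemma finite_tau_instances:
  assumes "finite E"
  shows "finite (tau_instances E eu el et tau i)"
proof -
  have "tau_instances E eu el et tau i \<subseteq> Pow E"
    unfolding tau_instances_def by auto
  then show ?thesis
    using assms by (simp add: finite_subset)
qed

lemma sum_count_C_edge:
  assumes "finite E" "i \<in> {1..6}"
  shows "(\<Sum>e\<in>E. count_C_edge E eu el et tau i e) = count_C E eu el et tau i"
proof -
  let ?I = "tau_instances E eu el et tau i"
  let ?first = "\<lambda>e S. e \<in> S \<and> (\<forall>f\<in>S. f \<noteq> e \<longrightarrow> et e < et f)"
  have "(\<Sum>e\<in>E. count_C_edge E eu el et tau i e) = (\<Sum>e\<in>E. \<Sum>S\<in>?I. if ?first e S then 1 else 0)"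
    unfolding count_C_edge_def using finite_tau_instances [OF assms(1)]
    by (intro sum.cong refl) (subst sum.inter_filter [symmetric], simp_all)
  also have "\<dots> = (\<Sum>S\<in>?I. \<Sum>e\<in>E. if ?first e S then 1 else 0)"
    by (rule sum.swap)
  also have "\<dots> = (\<Sum>S\<in>?I. card {e \<in> E. ?first e S})"
    using assms(1) by (intro sum.cong refl) (subst sum.inter_filter [symmetric], simp_all)
  also have "\<dots> = card ?I"
    using assms(2) by (simp add: card_first_edges_tau_instance)
  finally show ?thesis
    by (simp add: count_C_def)
qed

text \<open>Double counting: e lies in the forward window of d iff d lies in the backward window of e.\<close>
lemma sum_forward_windows_eq:
  fixes et F :: "'e \<Rightarrow> real"
  assumes "finite E"
  shows "(\<Sum>d\<in>E. \<Sum>e\<in>{e \<in> E. et d \<le> et e \<and> et e \<le> et d + w}. F e)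
           = (\<Sum>e\<in>E. real (card {f \<in> E. et e - w \<le> et f \<and> et f \<le> et e}) * F e)"
proof -
  let ?fwd = "\<lambda>d e. et d \<le> et e \<and> et e \<le> et d + w"
  have backward: "{d \<in> E. ?fwd d e} = {f \<in> E. et e - w \<le> et f \<and> et f \<le> et e}" for e
    by (auto; linarith)
  have "(\<Sum>d\<in>E. \<Sum>e\<in>{e \<in> E. ?fwd d e}. F e) = (\<Sum>e\<in>E. \<Sum>d\<in>E. if ?fwd d e then F e else 0)"
    using assms by (subst sum.swap) (simp add: sum.inter_filter)
  also have "\<dots> = (\<Sum>e\<in>E. real (card {d \<in> E. ?fwd d e}) * F e)"
    by (intro sum.cong refl) (simp add: sum.inter_filter [symmetric, OF assms])
  finally show ?thesis
    by (simp only: backward)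
qed

lemma m_prime_pos:
  assumes "finite E" "e \<in> E" "0 \<le> c * tau"
  shows "m_prime E et c tau e > 0"
proof -
  have "e \<in> {f \<in> E. et e - c * tau \<le> et f \<and> et f \<le> et e}"
    using assms(2,3) by simp
  then have "{f \<in> E. et e - c * tau \<le> et f \<and> et f \<le> et e} \<noteq> {}"
    by blast
  then show ?thesis
    using assms(1) unfolding m_prime_def by (simp only: card_gt_0_iff finite_Collect_conjI) simp
qed

definition TBC_I_window_weight ::
  "'e set \<Rightarrow> ('e \<Rightarrow> 'u) \<Rightarrow> ('e \<Rightarrow> 'l) \<Rightarrow> ('e \<Rightarrow> real) \<Rightarrow> real \<Rightarrow> real \<Rightarrow> nat \<Rightarrow> 'e \<Rightarrow> real" where
  "TBC_I_window_weight E eu el et tau c i d =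
     (\<Sum>e\<in>{e \<in> E. et d \<le> et e \<and> et e \<le> et d + c * tau}.
        real (card E) / real (m_prime E et c tau e) * real (count_C_edge E eu el et tau i e))"

lemma TBC_I_estimate_eq_sum_window_weights:
  "TBC_I_estimate E eu el et tau c s i d = (\<Sum>j<s. TBC_I_window_weight E eu el et tau c i (d j) / real s)"
  by (simp add: TBC_I_estimate_def TBC_I_window_weight_def sum_divide_distrib field_simps)

lemma TBC_I_window_weight_nonneg: "TBC_I_window_weight E eu el et tau c i d \<ge> 0"
  by (simp add: TBC_I_window_weight_def sum_nonneg)

lemma sum_TBC_I_window_weight:
  assumes "finite E" "i \<in> {1..6}" "0 \<le> c * tau"
  shows "(\<Sum>d\<in>E. TBC_I_window_weight E eu el et tau c i d) = real (card E) * count_C E eu el et tau i"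
proof -
  have "(\<Sum>d\<in>E. TBC_I_window_weight E eu el et tau c i d)
      = (\<Sum>e\<in>E. real (m_prime E et c tau e)
           * (real (card E) / real (m_prime E et c tau e) * real (count_C_edge E eu el et tau i e)))"
    unfolding TBC_I_window_weight_def m_prime_def using assms(1) by (rule sum_forward_windows_eq)
  also have "\<dots> = (\<Sum>e\<in>E. real (card E) * count_C_edge E eu el et tau i e)"
  proof (intro sum.cong refl)
    fix e assume "e \<in> E"
    then have "real (m_prime E et c tau e) \<noteq> 0"
      using m_prime_pos [OF assms(1) _ assms(3)] by simp
    then show "real (m_prime E et c tau e) * (real (card E) / real (m_prime E et c tau e)
        * real (count_C_edge E eu el et tau i e)) = real (card E) * count_C_edge E eu el et tau i e"
      by simp
  qed
  also have "\<dots> = real (card E) * count_C E eu el et tau i"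
    by (simp add: sum_distrib_left [symmetric] sum_count_C_edge [OF assms(1,2)] flip: of_nat_sum)
  finally show ?thesis .
qed

theorem theorem4p2:
  fixes E :: "'e set" and eu :: "'e \<Rightarrow> 'u" and el :: "'e \<Rightarrow> 'l" and et :: "'e \<Rightarrow> real"
    and tau c :: real and s i :: nat
  assumes "finite E" and "E \<noteq> {}"
    and "\<forall>e\<in>E. et e > 0"
    and "tau > 0" and "c > 0" and "s > 0"
    and "i \<in> {1..6}"
  shows "measure_pmf.expectation (draws_pmf E s) (TBC_I_estimate E eu el et tau c s i)
           = real (count_C E eu el et tau i) \<and>
         measure_pmf.variance (draws_pmf E s) (TBC_I_estimate E eu el et tau c s i)
           \<le> (real (card E) - 1) / real s * (real (count_C E eu el et tau i))^2"
proof -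
  define g where "g d = TBC_I_window_weight E eu el et tau c i d / real s" for d
  define m where "m = real (card E)"
  define C where "C = real (count_C E eu el et tau i)"
  have m_pos: "m > 0"
    using assms(1,2) by (simp add: m_def card_gt_0_iff)
  have estimate: "TBC_I_estimate E eu el et tau c s i = (\<lambda>d. \<Sum>j\<in>{..<s}. g (d j))"
    by (simp add: fun_eq_iff TBC_I_estimate_eq_sum_window_weights g_def)
  have g_nonneg: "0 \<le> g d" for d
    by (simp add: g_def TBC_I_window_weight_nonneg)
  have sum_g: "sum g E = m * C / real s"
    using assms(1,4,5,7)
    by (simp add: g_def m_def C_def sum_divide_distrib [symmetric] sum_TBC_I_window_weight)
  have "measure_pmf.expectation (draws_pmf E s) (TBC_I_estimate E eu el et tau c s i) = real s * (sum g E / m)"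
    using assms(1,2) by (simp add: estimate draws_pmf_def expectation_sum_components_Pi_pmf integral_pmf_of_set m_def)
  also have "\<dots> = C"
    using m_pos assms(6) by (simp add: sum_g)
  moreover have "measure_pmf.variance (draws_pmf E s) (TBC_I_estimate E eu el et tau c s i)
      = real s * measure_pmf.variance (pmf_of_set E) g"
    using assms(1,2) g_nonneg by (simp add: estimate draws_pmf_def variance_sum_components_Pi_pmf)
  moreover have "real s * measure_pmf.variance (pmf_of_set E) g \<le> real s * ((m - 1) / m\<^sup>2 * (sum g E)\<^sup>2)"
    unfolding m_def using assms(1,2) g_nonneg by (intro mult_left_mono variance_pmf_of_set_le) auto
  moreover have "real s * ((m - 1) / m\<^sup>2 * (sum g E)\<^sup>2) = (m - 1) / real s * C\<^sup>2"
    using m_pos assms(6) by (simp add: sum_g field_simps power2_eq_square)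
  ultimately show ?thesis
    by (simp add: m_def C_def)
qed

end
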